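(* Let $\mathcal{F}$ be a finite set of graphs. For every integer $T>0$ and real $\lambda>0$: (i) with $r=\sqrt{T+1}\,n$ and $n\ge r^2/\lambda^2$, $\mathsf{VC}\text{-}\mathsf{dim}\big(\mathbb{H}_{r,\lambda}(\mathcal{E}_{\mathsf{WL},\mathcal{F}}(n,d_T))\big)\in\Theta(r^2/\lambda^2)$; (ii) with $r=\sqrt{T/(T+1)}$ and $n\ge r^2/\lambda^2$, $\mathsf{VC}\text{-}\mathsf{dim}\big(\mathbb{H}_{1,\lambda}(\overline{\mathcal{E}}_{\mathsf{WL},\mathcal{F}}(n,d_T))\big)\in\Theta(1/\lambda^2)$.
   Context: $\mathcal{G}_n$ is the set of (unlabeled, simple, undirected) graphs on $n$ vertices. For a finite set of graphs $\mathcal{F}$, the $1$-WL$_{\mathcal{F}}$ colouring of $G$: $C^{1,\mathcal{F}}_0(v)=(\ell_F(v))_{F\in\mathcal{F}}$, where $\ell_F(v)=1$ if $v$ lies in some $X\subseteq V(G)$ with $G[X]$ isomorphic to $F$ and $0$ otherwise; $C^{1,\mathcal{F}}_t(v)=\mathsf{RELABEL}(C^{1,\mathcal{F}}_{t-1}(v),\{\!\{C^{1,\mathcal{F}}_{t-1}(u):u\in N(v)\}\!\})$ with a fixed injective $\mathsf{RELABEL}$ shared by all graphs. With $\Sigma_t$ the set of colours occurring at round $t$ over all of $\mathcal{G}_n$, $\phi_{\mathcal{F},t}(G)_c$ is the number of vertices of $G$ with colour $c$ at round $t$; $\phi^{(T)}_{\mathsf{WL},\mathcal{F}}(G)=[\phi_{\mathcal{F},0}(G),\dots,\phi_{\mathcal{F},T}(G)]\in\mathbb{R}^{d_T}$,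 and $\overline{\phi^{(T)}_{\mathsf{WL},\mathcal{F}}}$ is its normalisation to unit Euclidean norm. $\mathcal{E}_{\mathsf{WL},\mathcal{F}}(n,d_T)=\{\phi^{(T)}_{\mathsf{WL},\mathcal{F}}\}$, $\overline{\mathcal{E}}_{\mathsf{WL},\mathcal{F}}(n,d_T)=\{\overline{\phi^{(T)}_{\mathsf{WL},\mathcal{F}}}\}$. A sample $(\mathbf{x}_i,y_i)_{i\le s}\subset\mathbb{R}^d\times\{0,1\}$ is $(r,\lambda)$-separable if the $\mathbf{x}_i$ lie in a ball of radius $r$ and the distance between the convex hulls of the two classes is at least $2\lambda$. $\mathbb{H}_{r,\lambda}(\mathcal{E})$ is the set of partial concepts $h:\mathcal{G}_n\to\{0,1,\star\}$ such that every finite list of graphs in $\{G:h(G)\neq\star\}$, labelled by $h$ and embedded by some $\mathrm{emb}\in\mathcal{E}$, is $(r,\lambda)$-separable. VC dimension of a partial concept class: the largest size of a set $\{x_1,\dots,x_m\}$ such that every $\tau\in\{0,1\}^m$ is realised as $h(x_i)=\tau_i$ by some $h$ in the class. *)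

theory Defs
  imports Complex_Main "HOL-Library.Multiset"
begin

type_synonym lgraph = "(nat \<times> nat) set"
text \<open>A pattern graph with its own number of vertices k (vertices {0..<k}).\<close>
type_synonym fgraph = "nat \<times> (nat \<times> nat) set"

definition graph_on :: "nat \<Rightarrow> lgraph \<Rightarrow> bool" where
  "graph_on n E \<longleftrightarrow> E \<subseteq> {0..<n} \<times> {0..<n} \<and> (\<forall>u v. (u, v) \<in> E \<longrightarrow> (v, u) \<in> E)
      \<and> (\<forall>v. (v, v) \<notin> E)"

definition fin_graph :: "fgraph \<Rightarrow> bool" where
  "fin_graph H \<longleftrightarrow> graph_on (fst H) (snd H)"

definition graph_iso :: "nat \<Rightarrow> lgraph \<Rightarrow> lgraph \<Rightarrow> bool" where
  "graph_iso n E E' \<longleftrightarrow> (\<exists>f. bij_betw f {0..<n} {0..<n} \<and>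
      (\<forall>i\<in>{0..<n}. \<forall>j\<in>{0..<n}. (i, j) \<in> E \<longleftrightarrow> (f i, f j) \<in> E'))"

text \<open>G_n: unlabelled graphs on n vertices = isomorphism classes of labelled graphs.\<close>
definition Gn :: "nat \<Rightarrow> lgraph set set" where
  "Gn n = {{E'. graph_on n E' \<and> graph_iso n E E'} | E. graph_on n E}"

definition rep :: "lgraph set \<Rightarrow> lgraph" where
  "rep G = (SOME E. E \<in> G)"

definition in_induced_copy :: "nat \<Rightarrow> lgraph \<Rightarrow> fgraph \<Rightarrow> nat \<Rightarrow> bool" where
  "in_induced_copy n E H v \<longleftrightarrow> (\<exists>X f. X \<subseteq> {0..<n} \<and> v \<in> X \<and> bij_betw f {0..<fst H} X \<and>
      (\<forall>i<fst H. \<forall>j<fst H. (i, j) \<in> snd H \<longleftrightarrow> (f i, f j) \<in> E))"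

definition nbrs :: "lgraph \<Rightarrow> nat \<Rightarrow> nat set" where
  "nbrs E v = {u. (v, u) \<in> E}"

text \<open>Colours: the constructors form the (injective, graph-independent) RELABEL.
  The initial colour encodes the tuple (l_F(v))_F as the set of F with l_F(v) = 1.\<close>
datatype colour = Init "fgraph set" | Refine colour "colour multiset"

fun wl_col :: "fgraph set \<Rightarrow> nat \<Rightarrow> lgraph \<Rightarrow> nat \<Rightarrow> nat \<Rightarrow> colour" where
  "wl_col FF n E 0 v = Init {H \<in> FF. in_induced_copy n E H v}"
| "wl_col FF n E (Suc t) v =
     Refine (wl_col FF n E t v) (image_mset (wl_col FF n E t) (mset_set (nbrs E v)))"

fun depth :: "colour \<Rightarrow> nat" where
  "depth (Init _) = 0"
| "depth (Refine c _) = Suc (depth c)"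

definition Sigma_col :: "fgraph set \<Rightarrow> nat \<Rightarrow> nat \<Rightarrow> colour set" where
  "Sigma_col FF n t = {wl_col FF n E t v | E v. graph_on n E \<and> v < n}"

text \<open>Coordinate set of R^{d_T}: disjoint union of Sigma_0, ..., Sigma_T
  (colours of different rounds have different depth).\<close>
definition coords :: "fgraph set \<Rightarrow> nat \<Rightarrow> nat \<Rightarrow> colour set" where
  "coords FF n T = {c. depth c \<le> T \<and> c \<in> Sigma_col FF n (depth c)}"

definition wl_count :: "fgraph set \<Rightarrow> nat \<Rightarrow> lgraph \<Rightarrow> nat \<Rightarrow> colour \<Rightarrow> nat" where
  "wl_count FF n E t c = card {v. v < n \<and> wl_col FF n E t v = c}"

definition phi_wl :: "fgraph set \<Rightarrow> nat \<Rightarrow> nat \<Rightarrow> lgraph \<Rightarrow> colour \<Rightarrow> real" where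
  "phi_wl FF n T E = (\<lambda>c. if depth c \<le> T then real (wl_count FF n E (depth c) c) else 0)"

definition vnorm :: "'i set \<Rightarrow> ('i \<Rightarrow> real) \<Rightarrow> real" where
  "vnorm D x = sqrt (\<Sum>c\<in>D. (x c)\<^sup>2)"

definition normalise :: "'i set \<Rightarrow> ('i \<Rightarrow> real) \<Rightarrow> 'i \<Rightarrow> real" where
  "normalise D x = (\<lambda>c. x c / vnorm D x)"

definition emb_WL :: "fgraph set \<Rightarrow> nat \<Rightarrow> nat \<Rightarrow> lgraph set \<Rightarrow> colour \<Rightarrow> real" where
  "emb_WL FF n T G = phi_wl FF n T (rep G)"

definition emb_WL_norm :: "fgraph set \<Rightarrow> nat \<Rightarrow> nat \<Rightarrow> lgraph set \<Rightarrow> colour \<Rightarrow> real" where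
  "emb_WL_norm FF n T G = normalise (coords FF n T) (phi_wl FF n T (rep G))"

definition in_conv_hull :: "('i \<Rightarrow> real) set \<Rightarrow> ('i \<Rightarrow> real) \<Rightarrow> bool" where
  "in_conv_hull P x \<longleftrightarrow> (\<exists>u. (\<forall>p\<in>P. u p \<ge> 0) \<and> sum u P = 1 \<and> (\<forall>c. x c = (\<Sum>p\<in>P. u p * p c)))"

definition rl_separable :: "'i set \<Rightarrow> real \<Rightarrow> real \<Rightarrow> ('g \<Rightarrow> 'i \<Rightarrow> real) \<Rightarrow> ('g \<Rightarrow> bool)
    \<Rightarrow> 'g set \<Rightarrow> bool" where
  "rl_separable D r lam emb y S \<longleftrightarrow>
     (\<exists>x0. \<forall>G\<in>S. vnorm D (\<lambda>c. emb G c - x0 c) \<le> r) \<and>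
     (\<forall>p q. in_conv_hull (emb ` {G\<in>S. \<not> y G}) p \<and> in_conv_hull (emb ` {G\<in>S. y G}) q
        \<longrightarrow> vnorm D (\<lambda>c. p c - q c) \<ge> 2 * lam)"

text \<open>Partial concepts G_n -> {0,1,*}: Some False = 0, Some True = 1, None = *.\<close>
definition H_class :: "nat \<Rightarrow> 'i set \<Rightarrow> real \<Rightarrow> real \<Rightarrow> (lgraph set \<Rightarrow> 'i \<Rightarrow> real)
    \<Rightarrow> (lgraph set \<Rightarrow> bool option) set" where
  "H_class n D r lam emb = {h. (\<forall>G. G \<notin> Gn n \<longrightarrow> h G = None) \<and>
      (\<forall>S. finite S \<and> S \<subseteq> {G \<in> Gn n. h G \<noteq> None} \<longrightarrow>
         rl_separable D r lam emb (\<lambda>G. h G = Some True) S)}"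

definition shatters :: "('a \<Rightarrow> bool option) set \<Rightarrow> 'a set \<Rightarrow> bool" where
  "shatters H S \<longleftrightarrow> (\<forall>\<tau>. \<exists>h\<in>H. \<forall>x\<in>S. h x = Some (\<tau> x))"

definition vc_dim :: "'a set \<Rightarrow> ('a \<Rightarrow> bool option) set \<Rightarrow> nat" where
  "vc_dim X H = Sup {card S | S. S \<subseteq> X \<and> finite S \<and> shatters H S}"

end

theory Submission
  imports Defs "HOL-Number_Theory.Cong"
begin

(* Upper bound: pair up 2j points of a shattered set. Orienting each pair greedily against the
   running sum splits them into halves A, B with |sum_A x - sum_B x|^2 <= 4 j R^2, since all points
   lie in a ball of radius R. Labelling B positive, separability makes the class means at least
   2 lambda apart, so 4 lambda^2 <= 4 R^2 / j, i.e. j <= R^2 / lambda^2.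

   Lower bound: circulant graphs C_n(s) are vertex-transitive, so in every round 1-WL gives all
   their vertices one colour, whatever the patterns F are; the embedding of C_n(s) is alpha times
   the indicator of T + 1 colours. From round 1 on, the colour records the degree, which grows
   with s; so among C_n(0), ..., C_n(m - 1) each graph owns T coordinates on which all others
   vanish, and the convex hulls of any two label classes are at least alpha sqrt(2 T / m) apart.
   With m of order r^2 / lambda^2, which n >= r^2 / lambda^2 leaves room for, all labellings are
   separable. *)

lemma finite_graph_on: "finite {E. graph_on n E}"
  by (rule finite_subset[of _ "Pow ({0..<n} \<times> {0..<n})"]) (auto simp: graph_on_def)

lemma finite_Gn: "finite (Gn n)"
proof (rule finite_subset)
  show "Gn n \<subseteq> Pow {E. graph_on n E}" by (auto simp: Gn_def)
qed (simp add: finite_graph_on)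

lemma finite_Sigma_col: "finite (Sigma_col FF n t)"
proof -
  have "Sigma_col FF n t = (\<lambda>(E, v). wl_col FF n E t v) ` ({E. graph_on n E} \<times> {..<n})"
    unfolding Sigma_col_def by auto
  then show ?thesis using finite_graph_on by simp
qed

lemma finite_coords: "finite (coords FF n T)"
proof (rule finite_subset)
  show "coords FF n T \<subseteq> (\<Union>t\<le>T. Sigma_col FF n t)" by (auto simp: coords_def)
qed (simp add: finite_Sigma_col)

lemma depth_wl_col [simp]: "depth (wl_col FF n E t v) = t"
  by (induction t) auto

definition iso_map :: "nat \<Rightarrow> lgraph \<Rightarrow> lgraph \<Rightarrow> (nat \<Rightarrow> nat) \<Rightarrow> bool" where
  "iso_map n E E' f \<longleftrightarrow> bij_betw f {0..<n} {0..<n} \<and> (\<forall>i<n. \<forall>j<n. (i, j) \<in> E \<longleftrightarrow> (f i, f j) \<in> E')"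

lemma graph_iso_iff_iso_map: "graph_iso n E E' \<longleftrightarrow> (\<exists>f. iso_map n E E' f)"
  unfolding graph_iso_def iso_map_def by auto

lemma graph_iso_refl: "graph_iso n E E"
  unfolding graph_iso_def by (intro exI[of _ id]) auto

lemma iso_map_inv:
  assumes "iso_map n E E' f"
  shows "iso_map n E' E (inv_into {0..<n} f)"
proof -
  have bij: "bij_betw f {0..<n} {0..<n}" and adj: "\<forall>i<n. \<forall>j<n. (i, j) \<in> E \<longleftrightarrow> (f i, f j) \<in> E'"
    using assms by (auto simp: iso_map_def)
  let ?g = "inv_into {0..<n} f"
  have bij_g: "bij_betw ?g {0..<n} {0..<n}" using bij by (rule bij_betw_inv_into)
  have "?g i < n" "f (?g i) = i" if "i < n" for i
    using bij_g bij that by (auto simp: bij_betw_def f_inv_into_f)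
  then show ?thesis using adj bij_g unfolding iso_map_def by metis
qed

lemma in_induced_copy_iso:
  assumes "iso_map n E E' f" "in_induced_copy n E H v"
  shows "in_induced_copy n E' H (f v)"
proof -
  obtain X g where X: "X \<subseteq> {0..<n}" "v \<in> X" "bij_betw g {0..<fst H} X"
    and adj_g: "\<forall>i<fst H. \<forall>j<fst H. (i, j) \<in> snd H \<longleftrightarrow> (g i, g j) \<in> E"
    using assms(2) unfolding in_induced_copy_def by blast
  have bij: "bij_betw f {0..<n} {0..<n}" and adj: "\<forall>i<n. \<forall>j<n. (i, j) \<in> E \<longleftrightarrow> (f i, f j) \<in> E'"
    using assms(1) by (auto simp: iso_map_def)
  have "bij_betw f X (f ` X)" using bij X(1) by (meson bij_betw_def bij_betw_subset inj_on_subset)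
  then have "bij_betw (f \<circ> g) {0..<fst H} (f ` X)" using X(3) by (metis bij_betw_trans)
  moreover have "f ` X \<subseteq> {0..<n}" using bij X(1) by (auto simp: bij_betw_def)
  moreover have "g i < n" if "i < fst H" for i using X(1) bij_betwE[OF X(3)] that by fastforce
  then have "\<forall>i<fst H. \<forall>j<fst H. (i, j) \<in> snd H \<longleftrightarrow> ((f \<circ> g) i, (f \<circ> g) j) \<in> E'"
    using adj_g adj by simp
  ultimately show ?thesis unfolding in_induced_copy_def using X(2) by blast
qed

lemma wl_col_iso:
  assumes "graph_on n E" "graph_on n E'" "iso_map n E E' f" "v < n"
  shows "wl_col FF n E' t (f v) = wl_col FF n E t v"
  using assms(4)
proof (induction t arbitrary: v)
  case 0
  have "inv_into {0..<n} f (f v) = v"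
    using assms(3) 0 by (auto simp: iso_map_def bij_betw_def inv_into_f_f)
  then have "in_induced_copy n E' H (f v) \<longleftrightarrow> in_induced_copy n E H v" for H
    using in_induced_copy_iso[OF assms(3)] in_induced_copy_iso[OF iso_map_inv[OF assms(3)]] by metis
  then show ?case by simp
next
  case (Suc t)
  have bij: "bij_betw f {0..<n} {0..<n}" and adj: "\<forall>i<n. \<forall>j<n. (i, j) \<in> E \<longleftrightarrow> (f i, f j) \<in> E'"
    using assms(3) by (auto simp: iso_map_def)
  have nbrs_E: "nbrs E v \<subseteq> {0..<n}" using assms(1) by (auto simp: nbrs_def graph_on_def)
  have "nbrs E' (f v) \<subseteq> f ` nbrs E v"
  proof
    fix u assume u: "u \<in> nbrs E' (f v)"
    then have "u \<in> f ` {0..<n}"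
      using assms(2) bij by (auto simp: nbrs_def graph_on_def bij_betw_def)
    then show "u \<in> f ` nbrs E v" using adj Suc.prems u by (auto simp: nbrs_def)
  qed
  moreover have "f ` nbrs E v \<subseteq> nbrs E' (f v)" using adj nbrs_E Suc.prems by (auto simp: nbrs_def)
  ultimately have nbrs_E': "nbrs E' (f v) = f ` nbrs E v" by blast
  have "inj_on f (nbrs E v)" using bij nbrs_E by (meson bij_betw_def inj_on_subset)
  then have "image_mset (wl_col FF n E' t) (mset_set (nbrs E' (f v)))
      = image_mset (wl_col FF n E' t \<circ> f) (mset_set (nbrs E v))"
    by (simp add: nbrs_E' image_mset_mset_set[symmetric] multiset.map_comp)
  also have "\<dots> = image_mset (wl_col FF n E t) (mset_set (nbrs E v))"
  proof (rule image_mset_cong)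
    fix x assume "x \<in># mset_set (nbrs E v)"
    then have "x < n" using nbrs_E finite_subset[OF nbrs_E] by auto
    then show "(wl_col FF n E' t \<circ> f) x = wl_col FF n E t x" using Suc.IH by simp
  qed
  finally show ?case using Suc by simp
qed

lemma le_vc_dim:
  assumes "finite X" "S \<subseteq> X" "shatters H S"
  shows "card S \<le> vc_dim X H"
  unfolding vc_dim_def
proof (rule cSup_upper)
  show "card S \<in> {card S | S. S \<subseteq> X \<and> finite S \<and> shatters H S}"
    using assms finite_subset by blast
  show "bdd_above {card S | S. S \<subseteq> X \<and> finite S \<and> shatters H S}"
  proof (rule bdd_aboveI)
    fix x assume "x \<in> {card S | S. S \<subseteq> X \<and> finite S \<and> shatters H S}"
    then show "x \<le> card X" using card_mono[OF assms(1)] by blast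
  qed
qed

lemma vc_dim_le:
  assumes "\<And>S. S \<subseteq> X \<Longrightarrow> finite S \<Longrightarrow> shatters H S \<Longrightarrow> real (card S) \<le> B" "0 \<le> B"
  shows "real (vc_dim X H) \<le> B"
proof -
  have "vc_dim X H \<le> nat \<lfloor>B\<rfloor>"
  proof (cases "{card S | S. S \<subseteq> X \<and> finite S \<and> shatters H S} = {}")
    case False
    then show ?thesis unfolding vc_dim_def
    proof (rule cSup_least)
      fix x assume "x \<in> {card S |S. S \<subseteq> X \<and> finite S \<and> shatters H S}"
      then show "x \<le> nat \<lfloor>B\<rfloor>" using assms(1) by (auto intro: le_nat_floor)
    qed
  next
    case True
    then show ?thesis unfolding vc_dim_def by (simp only: True) simp
  qed
  then show ?thesis using assms(2) by linarith
qed

lemma H_class_rl_separable: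
  assumes "h \<in> H_class n D r lam emb" "finite S" "\<And>G. G \<in> S \<Longrightarrow> h G \<noteq> None"
  shows "rl_separable D r lam emb (\<lambda>G. h G = Some True) S"
proof -
  have "\<And>G. G \<notin> Gn n \<Longrightarrow> h G = None"
    and sep: "\<And>S. finite S \<Longrightarrow> S \<subseteq> {G \<in> Gn n. h G \<noteq> None} \<Longrightarrow>
      rl_separable D r lam emb (\<lambda>G. h G = Some True) S"
    using assms(1) unfolding H_class_def by auto
  then have "S \<subseteq> {G \<in> Gn n. h G \<noteq> None}" using assms(3) by blast
  then show ?thesis using sep assms(2) by blast
qed

lemma shatters_H_class:
  assumes "S \<subseteq> Gn n" "\<And>y S'. S' \<subseteq> S \<Longrightarrow> finite S' \<Longrightarrow> rl_separable D r lam emb y S'"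
  shows "shatters (H_class n D r lam emb) S"
  unfolding shatters_def
proof
  fix \<tau> :: "lgraph set \<Rightarrow> bool"
  define h where "h G = (if G \<in> S then Some (\<tau> G) else None)" for G
  have "h \<in> H_class n D r lam emb" unfolding H_class_def
  proof (intro CollectI conjI allI impI)
    fix G assume "G \<notin> Gn n"
    then show "h G = None" using assms(1) by (auto simp: h_def)
  next
    fix S' assume "finite S' \<and> S' \<subseteq> {G \<in> Gn n. h G \<noteq> None}"
    then show "rl_separable D r lam emb (\<lambda>G. h G = Some True) S'"
      by (intro assms(2)) (auto simp: h_def split: if_splits)
  qed
  then show "\<exists>h\<in>H_class n D r lam emb. \<forall>G\<in>S. h G = Some (\<tau> G)"
    by (intro bexI[of _ h]) (auto simp: h_def)
qed

lemma shattersE: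
  assumes "shatters H S"
  obtains h where "h \<in> H" "\<And>x. x \<in> S \<Longrightarrow> h x = Some (\<tau> x)"
  using assms unfolding shatters_def by blast

lemma vnorm_sq: "(vnorm D x)\<^sup>2 = (\<Sum>c\<in>D. (x c)\<^sup>2)"
  unfolding vnorm_def by (simp add: sum_nonneg)

lemma vnorm_scaled_indicator:
  assumes "finite D" "K \<subseteq> D"
  shows "vnorm D (\<lambda>c. if c \<in> K then a else 0) = \<bar>a\<bar> * sqrt (card K)"
proof -
  have "(\<Sum>c\<in>D. (if c \<in> K then a else 0)\<^sup>2) = (\<Sum>c\<in>D. if c \<in> K then a\<^sup>2 else 0)"
    by (rule sum.cong) auto
  also have "\<dots> = (\<Sum>c\<in>D \<inter> K. a\<^sup>2)"
    by (rule sum.inter_restrict[OF assms(1), symmetric])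
  also have "\<dots> = card K * a\<^sup>2" using assms(2) by (simp add: Int_absorb1)
  finally show ?thesis unfolding vnorm_def by (simp add: real_sqrt_mult mult.commute)
qed

lemma in_conv_hull_nonempty: "in_conv_hull P x \<Longrightarrow> P \<noteq> {}"
  unfolding in_conv_hull_def by auto

lemma in_conv_hull_mean:
  fixes emb :: "'g \<Rightarrow> 'i \<Rightarrow> real"
  assumes "finite A" "A \<noteq> {}"
  shows "in_conv_hull (emb ` A) (\<lambda>c. (\<Sum>G\<in>A. emb G c) / card A)"
proof -
  define u where "u x = real (card {G\<in>A. emb G = x}) / card A" for x
  have "sum u (emb ` A) = (\<Sum>G\<in>A. 1 / real (card A))"
    using sum.image_gen[OF assms(1), of "\<lambda>_. 1 / real (card A)" emb] by (simp add: u_def)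
  also have "\<dots> = 1" using assms by simp
  finally have "sum u (emb ` A) = 1" .
  moreover have "(\<Sum>G\<in>A. emb G c) / card A = (\<Sum>x\<in>emb ` A. u x * x c)" for c
  proof -
    have "(\<Sum>x\<in>emb ` A. u x * x c) = (\<Sum>x\<in>emb ` A. \<Sum>G\<in>{G\<in>A. emb G = x}. emb G c / card A)"
      by (rule sum.cong) (auto simp: u_def)
    also have "\<dots> = (\<Sum>G\<in>A. emb G c / card A)"
      using sum.image_gen[OF assms(1), of "\<lambda>G. emb G c / card A" emb] by simp
    finally show ?thesis by (simp add: sum_divide_distrib)
  qed
  ultimately show ?thesis unfolding in_conv_hull_def by (intro exI[of _ u]) (auto simp: u_def)
qed

lemma in_conv_hull_inj_image:
  fixes emb :: "'g \<Rightarrow> 'i \<Rightarrow> real"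
  assumes "in_conv_hull (emb ` A) p" "inj_on emb A"
  obtains w where "sum w A = 1" "\<And>c. p c = (\<Sum>G\<in>A. w G * emb G c)"
proof -
  obtain u where "sum u (emb ` A) = 1" "\<forall>c. p c = (\<Sum>x\<in>emb ` A. u x * x c)"
    using assms(1) unfolding in_conv_hull_def by blast
  then show thesis using sum.reindex[OF assms(2)] by (intro that[of "u \<circ> emb"]) auto
qed

lemma inverse_card_le_sum_sq:
  fixes u :: "'a \<Rightarrow> real"
  assumes "finite P" "sum u P = 1"
  shows "1 / card P \<le> (\<Sum>x\<in>P. (u x)\<^sup>2)"
proof -
  define N where "N = real (card P)"
  have "N > 0" using assms by (auto simp: N_def card_gt_0_iff)
  have "0 \<le> (\<Sum>x\<in>P. (u x - 1 / N)\<^sup>2)" by (simp add: sum_nonneg)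
  also have "\<dots> = (\<Sum>x\<in>P. (u x)\<^sup>2) - 2 / N * sum u P + N * (1 / N)\<^sup>2"
    by (simp add: power2_diff sum.distrib sum_subtractf sum_distrib_left sum_distrib_right
        sum_divide_distrib N_def algebra_simps)
  also have "\<dots> = (\<Sum>x\<in>P. (u x)\<^sup>2) - 1 / N"
    using \<open>N > 0\<close> assms(2) by (simp add: power2_eq_square field_simps)
  finally show ?thesis by (simp add: N_def)
qed

lemma exists_signs_sum_sq_le:
  fixes z :: "nat \<Rightarrow> 'i \<Rightarrow> real"
  shows "\<exists>\<epsilon>. (\<Sum>c\<in>D. (\<Sum>i<k. (if \<epsilon> i then 1 else -1) * z i c)\<^sup>2) \<le> (\<Sum>i<k. \<Sum>c\<in>D. (z i c)\<^sup>2)"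
proof (induction k)
  case 0
  show ?case by simp
next
  case (Suc k)
  then obtain \<epsilon> where IH: "(\<Sum>c\<in>D. (\<Sum>i<k. (if \<epsilon> i then 1 else -1) * z i c)\<^sup>2)
      \<le> (\<Sum>i<k. \<Sum>c\<in>D. (z i c)\<^sup>2)"
    by blast
  define s where "s c = (\<Sum>i<k. (if \<epsilon> i then 1 else -1) * z i c)" for c
  \<comment> \<open>the new sign is chosen against the running sum, which makes the cross term nonpositive\<close>
  define e where "e = ((\<Sum>c\<in>D. s c * z k c) \<le> 0)"
  define \<sigma> :: real where "\<sigma> = (if e then 1 else -1)"
  have cross: "\<sigma> * (\<Sum>c\<in>D. s c * z k c) \<le> 0" by (auto simp: \<sigma>_def e_def)
  have step: "(\<Sum>i<Suc k. (if (\<epsilon>(k := e)) i then 1 else -1) * z i c) = s c + \<sigma> * z k c" for c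
    unfolding s_def \<sigma>_def by (auto intro!: sum.cong)
  have "(s c + \<sigma> * z k c)\<^sup>2 = (s c)\<^sup>2 + 2 * \<sigma> * (s c * z k c) + (z k c)\<^sup>2" for c
    by (simp add: \<sigma>_def power2_sum power_mult_distrib)
  then have "(\<Sum>c\<in>D. (\<Sum>i<Suc k. (if (\<epsilon>(k := e)) i then 1 else -1) * z i c)\<^sup>2)
      = (\<Sum>c\<in>D. (s c)\<^sup>2) + 2 * (\<sigma> * (\<Sum>c\<in>D. s c * z k c)) + (\<Sum>c\<in>D. (z k c)\<^sup>2)"
    unfolding step by (simp add: sum.distrib sum_distrib_left mult.assoc)
  also have "\<dots> \<le> (\<Sum>i<Suc k. \<Sum>c\<in>D. (z i c)\<^sup>2)" using cross IH by (simp add: s_def)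
  finally show ?case by blast
qed

lemma sum_sq_diff_le:
  fixes u v a :: "'i \<Rightarrow> real"
  shows "(\<Sum>c\<in>D. (u c - v c)\<^sup>2) \<le> 2 * (\<Sum>c\<in>D. (u c - a c)\<^sup>2) + 2 * (\<Sum>c\<in>D. (v c - a c)\<^sup>2)"
proof -
  have "(u c - v c)\<^sup>2 \<le> 2 * (u c - a c)\<^sup>2 + 2 * (v c - a c)\<^sup>2" for c
    using zero_le_power2[of "u c + v c - 2 * a c"] by (simp add: power2_eq_square algebra_simps)
  then show ?thesis by (simp add: sum_distrib_left sum.distrib[symmetric] sum_mono)
qed

lemma exists_balanced_halves:
  fixes emb :: "'g \<Rightarrow> 'i \<Rightarrow> real"
  assumes "finite S" "card S = 2 * j"
    and ball: "\<And>G. G \<in> S \<Longrightarrow> (\<Sum>c\<in>D. (emb G c - x0 c)\<^sup>2) \<le> R\<^sup>2"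
  obtains A B where "A \<subseteq> S" "B \<subseteq> S" "A \<inter> B = {}" "card A = j" "card B = j"
    "(\<Sum>c\<in>D. ((\<Sum>G\<in>A. emb G c) - (\<Sum>G\<in>B. emb G c))\<^sup>2) \<le> 4 * real j * R\<^sup>2"
proof -
  obtain g where g: "bij_betw g {..<2 * j} S"
    using ex_bij_betw_nat_finite[OF assms(1)] assms(2) by (auto simp: atLeast0LessThan)
  have g_eq: "g i = g i' \<longleftrightarrow> i = i'" if "i < 2 * j" "i' < 2 * j" for i i'
    using g that by (auto simp: bij_betw_def inj_on_def)
  have g_in: "g i \<in> S" if "i < 2 * j" for i using bij_betwE[OF g] that by blast
  define z where "z i c = emb (g i) c - emb (g (j + i)) c" for i c
  have z_bound: "(\<Sum>c\<in>D. (z i c)\<^sup>2) \<le> 4 * R\<^sup>2" if "i < j" for i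
  proof -
    have "(\<Sum>c\<in>D. (emb (g i) c - x0 c)\<^sup>2) \<le> R\<^sup>2" "(\<Sum>c\<in>D. (emb (g (j + i)) c - x0 c)\<^sup>2) \<le> R\<^sup>2"
      using ball g_in that by auto
    then show ?thesis
      using sum_sq_diff_le[where D=D and u="emb (g i)" and v="emb (g (j + i))" and a=x0]
      unfolding z_def by linarith
  qed
  obtain \<epsilon> where "(\<Sum>c\<in>D. (\<Sum>i<j. (if \<epsilon> i then 1 else -1) * z i c)\<^sup>2) \<le> (\<Sum>i<j. \<Sum>c\<in>D. (z i c)\<^sup>2)"
    using exists_signs_sum_sq_le by blast
  also have "\<dots> \<le> (\<Sum>i<j. 4 * R\<^sup>2)" by (rule sum_mono) (simp add: z_bound)
  finally have signed_bound: "(\<Sum>c\<in>D. (\<Sum>i<j. (if \<epsilon> i then 1 else -1) * z i c)\<^sup>2) \<le> 4 * real j * R\<^sup>2"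
    by simp
  define a where "a i = (if \<epsilon> i then g i else g (j + i))" for i
  define b where "b i = (if \<epsilon> i then g (j + i) else g i)" for i
  have inj: "inj_on a {..<j}" "inj_on b {..<j}"
    using g_eq by (auto simp: inj_on_def a_def b_def split: if_splits)
  have "a ` {..<j} \<inter> b ` {..<j} = {}"
    using g_eq by (auto simp: a_def b_def split: if_splits)
  moreover have "a ` {..<j} \<subseteq> S" "b ` {..<j} \<subseteq> S" using g_in by (auto simp: a_def b_def)
  moreover have "(\<Sum>G\<in>a ` {..<j}. emb G c) - (\<Sum>G\<in>b ` {..<j}. emb G c)
      = (\<Sum>i<j. (if \<epsilon> i then 1 else -1) * z i c)" for c
    unfolding sum.reindex[OF inj(1)] sum.reindex[OF inj(2)] sum_subtractf[symmetric]
    by (rule sum.cong) (auto simp: a_def b_def z_def)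
  ultimately show thesis using signed_bound inj by (intro that) (auto simp: card_image)
qed

lemma rl_separable_mean_dist:
  assumes "rl_separable D r lam emb y (A \<union> B)" "finite A" "finite B" "A \<noteq> {}" "B \<noteq> {}"
    and "\<forall>G\<in>A. \<not> y G" "\<forall>G\<in>B. y G"
  shows "2 * lam \<le> vnorm D (\<lambda>c. (\<Sum>G\<in>A. emb G c) / card A - (\<Sum>G\<in>B. emb G c) / card B)"
proof -
  have classes: "{G \<in> A \<union> B. \<not> y G} = A" "{G \<in> A \<union> B. y G} = B" using assms(6,7) by auto
  have "in_conv_hull (emb ` A) (\<lambda>c. (\<Sum>G\<in>A. emb G c) / card A)"
    "in_conv_hull (emb ` B) (\<lambda>c. (\<Sum>G\<in>B. emb G c) / card B)"
    using assms(2-5) by (auto intro: in_conv_hull_mean)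
  moreover have "\<And>p q. in_conv_hull (emb ` A) p \<Longrightarrow> in_conv_hull (emb ` B) q \<Longrightarrow>
      2 * lam \<le> vnorm D (\<lambda>c. p c - q c)"
    using assms(1) unfolding rl_separable_def classes by blast
  ultimately show ?thesis by blast
qed

lemma card_shattered_le:
  fixes emb :: "lgraph set \<Rightarrow> 'i \<Rightarrow> real"
  assumes lam: "lam > 0" and shatters: "shatters (H_class n D R lam emb) S" and "finite S"
  shows "real (card S) \<le> 2 * R\<^sup>2 / lam\<^sup>2 + 1"
proof (cases "card S \<le> 1")
  case True
  have "0 \<le> 2 * R\<^sup>2 / lam\<^sup>2" by simp
  then show ?thesis using True by linarith
next
  case False
  define j where "j = card S div 2"
  have j: "1 \<le> j" "2 * j \<le> card S" "card S \<le> 2 * j + 1" using False by (auto simp: j_def)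
  obtain h0 where "h0 \<in> H_class n D R lam emb" "\<And>G. G \<in> S \<Longrightarrow> h0 G = Some False"
    using shattersE[OF shatters, of "\<lambda>_. False"] by blast
  then have "rl_separable D R lam emb (\<lambda>G. h0 G = Some True) S"
    using \<open>finite S\<close> by (intro H_class_rl_separable) auto
  then obtain x0 where x0: "\<forall>G\<in>S. vnorm D (\<lambda>c. emb G c - x0 c) \<le> R"
    unfolding rl_separable_def by blast
  obtain S0 where S0: "S0 \<subseteq> S" "card S0 = 2 * j" "finite S0"
    using obtain_subset_with_card_n[OF j(2)] by blast
  have ball: "(\<Sum>c\<in>D. (emb G c - x0 c)\<^sup>2) \<le> R\<^sup>2" if "G \<in> S0" for G
  proof -
    have "vnorm D (\<lambda>c. emb G c - x0 c) \<le> R" using x0 S0(1) that by blast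
    moreover have "0 \<le> vnorm D (\<lambda>c. emb G c - x0 c)" by (simp add: vnorm_def sum_nonneg)
    ultimately have "(vnorm D (\<lambda>c. emb G c - x0 c))\<^sup>2 \<le> R\<^sup>2" by (rule power_mono)
    then show ?thesis by (simp add: vnorm_sq)
  qed
  obtain A B where AB: "A \<subseteq> S0" "B \<subseteq> S0" "A \<inter> B = {}" "card A = j" "card B = j"
    and halves: "(\<Sum>c\<in>D. ((\<Sum>G\<in>A. emb G c) - (\<Sum>G\<in>B. emb G c))\<^sup>2) \<le> 4 * real j * R\<^sup>2"
    by (rule exists_balanced_halves[OF S0(3) S0(2) ball])
  have fin: "finite A" "finite B" "A \<noteq> {}" "B \<noteq> {}" using AB j(1) by (auto intro: card_ge_0_finite)
  obtain h where h: "h \<in> H_class n D R lam emb" "\<And>G. G \<in> S \<Longrightarrow> h G = Some (G \<in> B)"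
    using shattersE[OF shatters, of "\<lambda>G. G \<in> B"] by blast
  have "A \<subseteq> S" "B \<subseteq> S" using AB S0(1) by auto
  have h_A: "\<forall>G\<in>A. \<not> h G = Some True"
  proof
    fix G assume "G \<in> A"
    then have "G \<in> S" "G \<notin> B" using \<open>A \<subseteq> S\<close> AB(3) by auto
    then show "\<not> h G = Some True" using h(2) by simp
  qed
  have h_B: "\<forall>G\<in>B. h G = Some True" using h(2) \<open>B \<subseteq> S\<close> by auto
  have "rl_separable D R lam emb (\<lambda>G. h G = Some True) (A \<union> B)"
    using h \<open>A \<subseteq> S\<close> \<open>B \<subseteq> S\<close> fin by (intro H_class_rl_separable) auto
  then have "2 * lam \<le> vnorm D (\<lambda>c. (\<Sum>G\<in>A. emb G c) / card A - (\<Sum>G\<in>B. emb G c) / card B)"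
    using fin h_A h_B by (rule rl_separable_mean_dist)
  then have "(2 * lam)\<^sup>2 \<le> (vnorm D (\<lambda>c. ((\<Sum>G\<in>A. emb G c) - (\<Sum>G\<in>B. emb G c)) / j))\<^sup>2"
    using lam by (intro power_mono) (auto simp: AB diff_divide_distrib)
  also have "\<dots> = (\<Sum>c\<in>D. ((\<Sum>G\<in>A. emb G c) - (\<Sum>G\<in>B. emb G c))\<^sup>2) / (real j)\<^sup>2"
    by (simp add: vnorm_sq power_divide sum_divide_distrib)
  also have "\<dots> \<le> 4 * real j * R\<^sup>2 / (real j)\<^sup>2" using halves by (simp add: divide_right_mono)
  also have "\<dots> = 4 * R\<^sup>2 / j" by (simp add: power2_eq_square)
  finally have "real j \<le> R\<^sup>2 / lam\<^sup>2" using lam j(1) by (simp add: field_simps power_mult_distrib)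
  then show ?thesis using j(3) by linarith
qed

lemma vc_dim_H_class_le:
  fixes emb :: "lgraph set \<Rightarrow> 'i \<Rightarrow> real"
  assumes "lam > 0"
  shows "real (vc_dim (Gn n) (H_class n D R lam emb)) \<le> 3 * max 1 (R\<^sup>2 / lam\<^sup>2)"
proof (rule vc_dim_le)
  fix S assume "finite S" "shatters (H_class n D R lam emb) S"
  then have "real (card S) \<le> 2 * R\<^sup>2 / lam\<^sup>2 + 1" using card_shattered_le assms by blast
  then show "real (card S) \<le> 3 * max 1 (R\<^sup>2 / lam\<^sup>2)" by linarith
qed simp

lemma sum_sq_ge_private_supports:
  fixes emb :: "'g \<Rightarrow> 'i \<Rightarrow> real" and w :: "'g \<Rightarrow> real"
  assumes "finite S" "finite D"
    and emb: "\<And>G c. G \<in> S \<Longrightarrow> emb G c = (if c \<in> K G then \<alpha> else 0)"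
    and P: "\<And>G. G \<in> S \<Longrightarrow> P G \<subseteq> D \<inter> K G" "\<And>G. G \<in> S \<Longrightarrow> card (P G) = T"
    and exclusive: "\<And>G G'. G \<in> S \<Longrightarrow> G' \<in> S \<Longrightarrow> G \<noteq> G' \<Longrightarrow> P G \<inter> K G' = {}"
  shows "\<alpha>\<^sup>2 * T * (\<Sum>G\<in>S. (w G)\<^sup>2) \<le> (\<Sum>c\<in>D. (\<Sum>G\<in>S. w G * emb G c)\<^sup>2)"
proof -
  have private_coord: "(\<Sum>G'\<in>S. w G' * emb G' c) = \<alpha> * w G" if "G \<in> S" "c \<in> P G" for G c
  proof -
    have "w G' * emb G' c = (if G' = G then w G * \<alpha> else 0)" if "G' \<in> S" for G'
    proof (cases "G' = G")
      case True
      have "c \<in> K G" using P(1)[OF \<open>G \<in> S\<close>] \<open>c \<in> P G\<close> by blast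
      then show ?thesis using emb[OF \<open>G \<in> S\<close>] True by simp
    next
      case False
      then have "c \<notin> K G'" using exclusive[OF \<open>G \<in> S\<close> that] \<open>c \<in> P G\<close> by blast
      then show ?thesis using emb[OF that] False by simp
    qed
    then have "(\<Sum>G'\<in>S. w G' * emb G' c) = (\<Sum>G'\<in>S. if G' = G then w G * \<alpha> else 0)"
      by (rule sum.cong[OF refl])
    then show ?thesis using that assms(1) by simp
  qed
  have fin: "finite (P G)" if "G \<in> S" for G using P(1)[OF that] assms(2) finite_subset by blast
  have "\<alpha>\<^sup>2 * T * (\<Sum>G\<in>S. (w G)\<^sup>2) = (\<Sum>G\<in>S. \<Sum>c\<in>P G. (\<Sum>G'\<in>S. w G' * emb G' c)\<^sup>2)"
    by (simp add: private_coord P(2) sum_distrib_left power_mult_distrib mult_ac)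
  also have "\<dots> = (\<Sum>c\<in>(\<Union>G\<in>S. P G). (\<Sum>G'\<in>S. w G' * emb G' c)\<^sup>2)"
    using exclusive P(1) fin by (intro sum.UNION_disjoint[symmetric] assms(1)) blast+
  also have "\<dots> \<le> (\<Sum>c\<in>D. (\<Sum>G'\<in>S. w G' * emb G' c)\<^sup>2)"
    using P(1) assms(2) by (intro sum_mono2) auto
  finally show ?thesis .
qed

lemma conv_hulls_dist_sq_ge_private_supports:
  fixes emb :: "'g \<Rightarrow> 'i \<Rightarrow> real"
  assumes "finite S" "finite D"
    and emb: "\<And>G c. G \<in> S \<Longrightarrow> emb G c = (if c \<in> K G then \<alpha> else 0)"
    and P: "\<And>G. G \<in> S \<Longrightarrow> P G \<subseteq> D \<inter> K G" "\<And>G. G \<in> S \<Longrightarrow> card (P G) = T"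
    and exclusive: "\<And>G G'. G \<in> S \<Longrightarrow> G' \<in> S \<Longrightarrow> G \<noteq> G' \<Longrightarrow> P G \<inter> K G' = {}"
    and p: "in_conv_hull (emb ` {G\<in>S. \<not> y G}) p" and q: "in_conv_hull (emb ` {G\<in>S. y G}) q"
  shows "2 * \<alpha>\<^sup>2 * T / card S \<le> (\<Sum>c\<in>D. (p c - q c)\<^sup>2)"
proof (cases "\<alpha> = 0 \<or> T = 0")
  case True
  then show ?thesis by (auto simp: sum_nonneg)
next
  case False
  define A where "A = {G\<in>S. \<not> y G}"
  define B where "B = {G\<in>S. y G}"
  have AB: "finite A" "finite B" "A \<union> B = S" "A \<inter> B = {}"
    using assms(1) by (auto simp: A_def B_def)
  have "inj_on emb S"
  proof (rule inj_onI)
    fix G G' assume G: "G \<in> S" "G' \<in> S" "emb G = emb G'"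
    obtain c where c: "c \<in> P G" using P(2)[OF G(1)] False by fastforce
    show "G = G'"
    proof (rule ccontr)
      assume "G \<noteq> G'"
      then have "c \<in> K G" "c \<notin> K G'" using P(1)[OF G(1)] exclusive[OF G(1,2)] c by blast+
      moreover have "emb G c = emb G' c" using G(3) by simp
      ultimately show False using emb[OF G(1)] emb[OF G(2)] False by simp
    qed
  qed
  then have "inj_on emb A" "inj_on emb B" by (auto simp: A_def B_def intro: inj_on_subset)
  obtain u where u: "sum u A = 1" "\<And>c. p c = (\<Sum>G\<in>A. u G * emb G c)"
    using in_conv_hull_inj_image p \<open>inj_on emb A\<close> unfolding A_def by blast
  obtain v where v: "sum v B = 1" "\<And>c. q c = (\<Sum>G\<in>B. v G * emb G c)"
    using in_conv_hull_inj_image q \<open>inj_on emb B\<close> unfolding B_def by blast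
  define w where "w G = (if y G then - v G else u G)" for G
  have w_A: "w G = u G" if "G \<in> A" for G using that by (simp add: w_def A_def)
  have w_B: "w G = - v G" if "G \<in> B" for G using that by (simp add: w_def B_def)
  have split_S: "(\<Sum>G\<in>S. f G) = (\<Sum>G\<in>A. f G) + (\<Sum>G\<in>B. f G)" for f :: "'g \<Rightarrow> real"
    unfolding AB(3)[symmetric] by (rule sum.union_disjoint[OF AB(1,2,4)])
  have "2 / card S \<le> (\<Sum>G\<in>S. (w G)\<^sup>2)"
  proof -
    have "A \<noteq> {}" "B \<noteq> {}" using u(1) v(1) by auto
    then have "0 < card A" "0 < card B" using AB(1,2) by (auto simp: card_gt_0_iff)
    moreover have "card A \<le> card S" "card B \<le> card S" using AB assms(1) by (auto intro: card_mono)
    ultimately have "1 / card S \<le> 1 / card A" "1 / card S \<le> 1 / card B"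
      by (auto intro!: divide_left_mono mult_pos_pos)
    moreover have "(\<Sum>G\<in>S. (w G)\<^sup>2) = (\<Sum>G\<in>A. (u G)\<^sup>2) + (\<Sum>G\<in>B. (v G)\<^sup>2)"
      unfolding split_S by (simp add: w_A w_B)
    ultimately show ?thesis using inverse_card_le_sum_sq[OF AB(1) u(1)]
      inverse_card_le_sum_sq[OF AB(2) v(1)] by simp
  qed
  have "2 * \<alpha>\<^sup>2 * T / card S = \<alpha>\<^sup>2 * T * (2 / card S)" by simp
  also have "\<dots> \<le> \<alpha>\<^sup>2 * T * (\<Sum>G\<in>S. (w G)\<^sup>2)"
    using \<open>2 / card S \<le> (\<Sum>G\<in>S. (w G)\<^sup>2)\<close> by (rule mult_left_mono) simp
  also have "\<dots> \<le> (\<Sum>c\<in>D. (\<Sum>G\<in>S. w G * emb G c)\<^sup>2)"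
    by (rule sum_sq_ge_private_supports[OF assms(1-2) emb P exclusive])
  also have "\<dots> = (\<Sum>c\<in>D. (p c - q c)\<^sup>2)"
    unfolding split_S by (simp add: w_A w_B u(2) v(2) sum_negf)
  finally show ?thesis .
qed

definition circulant :: "nat \<Rightarrow> nat \<Rightarrow> lgraph" where
  "circulant n s = {(i, j). i < n \<and> j < n \<and> i \<noteq> j \<and>
     ((int j - int i) mod int n \<le> int s \<or> (int i - int j) mod int n \<le> int s)}"

lemma graph_on_circulant: "graph_on n (circulant n s)"
  unfolding graph_on_def circulant_def by auto

lemma mod_diff_rotate:
  "(int ((j + k) mod n) - int ((i + k) mod n)) mod int n = (int j - int i) mod int n"
proof -
  have "(int ((j + k) mod n) - int ((i + k) mod n)) mod int n
      = (int (j + k) mod int n - int (i + k) mod int n) mod int n"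
    by (simp only: of_nat_mod)
  also have "\<dots> = (int (j + k) - int (i + k)) mod int n" by (rule mod_diff_eq)
  finally show ?thesis by simp
qed

lemma iso_map_rotate:
  assumes "0 < n"
  shows "iso_map n (circulant n s) (circulant n s) (\<lambda>i. (i + k) mod n)"
proof -
  have inj: "(i + k) mod n = (j + k) mod n \<longleftrightarrow> i = j" if "i < n" "j < n" for i j
    using that by (metis cong_add_rcancel_nat cong_def mod_less)
  then have "inj_on (\<lambda>i. (i + k) mod n) {0..<n}" by (auto intro: inj_onI)
  moreover have "(\<lambda>i. (i + k) mod n) ` {0..<n} \<subseteq> {0..<n}" using assms by auto
  ultimately have "bij_betw (\<lambda>i. (i + k) mod n) {0..<n} {0..<n}"
    by (simp add: bij_betw_def endo_inj_surj)
  moreover have "(i, j) \<in> circulant n s \<longleftrightarrow> ((i + k) mod n, (j + k) mod n) \<in> circulant n s"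
    if "i < n" "j < n" for i j
    using that assms inj mod_diff_rotate[of j k n i] mod_diff_rotate[of i k n j]
    by (auto simp: circulant_def)
  ultimately show ?thesis unfolding iso_map_def by blast
qed

lemma wl_col_circulant_eq:
  assumes "v < n"
  shows "wl_col FF n (circulant n s) t v = wl_col FF n (circulant n s) t 0"
  using wl_col_iso[OF graph_on_circulant graph_on_circulant iso_map_rotate[of n s v], of 0 FF t]
    assms by simp

definition circulant_class :: "nat \<Rightarrow> nat \<Rightarrow> lgraph set" where
  "circulant_class n s = {E. graph_on n E \<and> graph_iso n (circulant n s) E}"

definition circulant_colour :: "fgraph set \<Rightarrow> nat \<Rightarrow> nat \<Rightarrow> nat \<Rightarrow> colour" where
  "circulant_colour FF n s t = wl_col FF n (circulant n s) t 0"

lemma circulant_class_in_Gn: "circulant_class n s \<in> Gn n"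
  unfolding circulant_class_def Gn_def using graph_on_circulant by blast

lemma circulant_in_circulant_class: "circulant n s \<in> circulant_class n s"
  by (simp add: circulant_class_def graph_on_circulant graph_iso_refl)

lemma rep_circulant_class: "rep (circulant_class n s) \<in> circulant_class n s"
  unfolding rep_def using circulant_in_circulant_class by (rule someI)

lemma wl_col_circulant_class:
  assumes "E \<in> circulant_class n s" "v < n"
  shows "wl_col FF n E t v = circulant_colour FF n s t"
proof -
  obtain f where f: "iso_map n (circulant n s) E f"
    using assms(1) by (auto simp: circulant_class_def graph_iso_iff_iso_map)
  then have "v \<in> f ` {0..<n}" using assms(2) by (auto simp: iso_map_def bij_betw_def)
  then obtain u where "u < n" "v = f u" by auto
  moreover have "graph_on n E" using assms(1) by (simp add: circulant_class_def)
  ultimately have "wl_col FF n E t v = wl_col FF n (circulant n s) t u"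
    using wl_col_iso[OF graph_on_circulant _ f] by simp
  also have "\<dots> = circulant_colour FF n s t"
    using wl_col_circulant_eq[OF \<open>u < n\<close>] by (simp add: circulant_colour_def)
  finally show ?thesis .
qed

lemma depth_circulant_colour [simp]: "depth (circulant_colour FF n s t) = t"
  by (simp add: circulant_colour_def)

lemma inj_circulant_colour: "inj (circulant_colour FF n s)"
  by (rule injI) (metis depth_circulant_colour)

lemma card_circulant_colours: "card (circulant_colour FF n s ` A) = card A"
  by (rule card_image[OF inj_on_subset[OF inj_circulant_colour subset_UNIV]])

lemma circulant_colour_in_coords:
  assumes "0 < n" "t \<le> T"
  shows "circulant_colour FF n s t \<in> coords FF n T"
proof -
  have "circulant_colour FF n s t \<in> Sigma_col FF n t"
    unfolding Sigma_col_def circulant_colour_def using graph_on_circulant assms(1) by blast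
  then show ?thesis using assms(2) by (simp add: coords_def)
qed

lemma phi_wl_circulant_class:
  assumes "E \<in> circulant_class n s"
  shows "phi_wl FF n T E c = (if c \<in> circulant_colour FF n s ` {..T} then real n else 0)"
proof -
  have "wl_count FF n E t c = (if circulant_colour FF n s t = c then n else 0)" for t
  proof -
    have "{v. v < n \<and> wl_col FF n E t v = c}
        = (if circulant_colour FF n s t = c then {..<n} else {})"
      using wl_col_circulant_class[OF assms] by auto
    then show ?thesis unfolding wl_count_def by simp
  qed
  moreover have "c \<in> circulant_colour FF n s ` {..T} \<longleftrightarrow>
      depth c \<le> T \<and> circulant_colour FF n s (depth c) = c"
    by (auto intro: rev_image_eqI)
  ultimately show ?thesis unfolding phi_wl_def by auto
qed

lemma vnorm_circulant_indicator:
  assumes "0 < n"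
  shows "vnorm (coords FF n T) (\<lambda>c. if c \<in> circulant_colour FF n s ` {..T} then a else 0)
    = \<bar>a\<bar> * sqrt (real T + 1)"
proof -
  have "circulant_colour FF n s ` {..T} \<subseteq> coords FF n T"
    using circulant_colour_in_coords[OF assms] by auto
  then show ?thesis
    using vnorm_scaled_indicator[OF finite_coords] by (simp add: card_circulant_colours)
qed

lemma emb_WL_circulant_class:
  "emb_WL FF n T (circulant_class n s) c
    = (if c \<in> circulant_colour FF n s ` {..T} then real n else 0)"
  unfolding emb_WL_def by (rule phi_wl_circulant_class[OF rep_circulant_class])

lemma emb_WL_norm_circulant_class:
  assumes "0 < n"
  shows "emb_WL_norm FF n T (circulant_class n s) c
    = (if c \<in> circulant_colour FF n s ` {..T} then 1 / sqrt (real T + 1) else 0)"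
proof -
  have "phi_wl FF n T (rep (circulant_class n s))
      = (\<lambda>c. if c \<in> circulant_colour FF n s ` {..T} then real n else 0)"
    using phi_wl_circulant_class[OF rep_circulant_class] by blast
  then show ?thesis
    using assms unfolding emb_WL_norm_def normalise_def by (simp add: vnorm_circulant_indicator)
qed

lemma card_nbrs_circulant_less:
  assumes "s < s'" "2 * s' \<le> n"
  shows "card (nbrs (circulant n s) 0) < card (nbrs (circulant n s') 0)"
proof (rule psubset_card_mono)
  show "finite (nbrs (circulant n s') 0)"
    by (rule finite_subset[of _ "{..<n}"]) (auto simp: nbrs_def circulant_def)
  have "(int 0 - int (s + 1)) mod int n = (int n + (int 0 - int (s + 1))) mod int n"
    by (simp only: mod_add_self1)
  also have "\<dots> = (int n - int (s + 1)) mod int n" by simp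
  also have "\<dots> = int n - int (s + 1)" using assms by (intro mod_pos_pos_trivial) auto
  finally have "(int 0 - int (s + 1)) mod int n = int n - int (s + 1)" .
  moreover have "(int (s + 1) - int 0) mod int n = int (s + 1)" using assms by simp
  ultimately have "s + 1 \<in> nbrs (circulant n s') 0 - nbrs (circulant n s) 0"
    using assms unfolding nbrs_def circulant_def by auto
  moreover have "nbrs (circulant n s) 0 \<subseteq> nbrs (circulant n s') 0"
    using assms(1) unfolding nbrs_def circulant_def by auto
  ultimately show "nbrs (circulant n s) 0 \<subset> nbrs (circulant n s') 0" by blast
qed

lemma circulant_colour_neq:
  assumes "s \<noteq> s'" "2 * s \<le> n" "2 * s' \<le> n" "0 < t"
  shows "circulant_colour FF n s t \<noteq> circulant_colour FF n s' t'"
proof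
  assume eq: "circulant_colour FF n s t = circulant_colour FF n s' t'"
  then have "t' = t" by (metis depth_circulant_colour)
  obtain t0 where "t = Suc t0" using assms(4) by (cases t) auto
  then have "size (image_mset (wl_col FF n (circulant n s) t0) (mset_set (nbrs (circulant n s) 0)))
      = size (image_mset (wl_col FF n (circulant n s') t0) (mset_set (nbrs (circulant n s') 0)))"
    using eq \<open>t' = t\<close> by (simp add: circulant_colour_def)
  then have "card (nbrs (circulant n s) 0) = card (nbrs (circulant n s') 0)" by simp
  moreover have "s < s' \<or> s' < s" using assms(1) by linarith
  ultimately show False
    using card_nbrs_circulant_less[of s s' n] card_nbrs_circulant_less[of s' s n] assms(2,3) by auto
qed

lemma inj_on_circulant_class:
  assumes "2 * m \<le> n + 2"
  shows "inj_on (circulant_class n) {..<m}"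
proof (rule inj_onI)
  fix s s' assume s: "s \<in> {..<m}" "s' \<in> {..<m}" "circulant_class n s = circulant_class n s'"
  show "s = s'"
  proof (rule ccontr)
    assume "s \<noteq> s'"
    then have "2 * s \<le> n" "2 * s' \<le> n" "0 < n" using s(1,2) assms by auto
    then have "circulant_colour {} n s' 1 = circulant_colour {} n s 1"
      using wl_col_circulant_class[of "circulant n s'" n s 0 "{}" 1]
        circulant_in_circulant_class s(3)
      by (simp add: circulant_colour_def)
    moreover have "circulant_colour {} n s 1 \<noteq> circulant_colour {} n s' 1"
      using \<open>s \<noteq> s'\<close> \<open>2 * s \<le> n\<close> \<open>2 * s' \<le> n\<close> by (intro circulant_colour_neq) auto
    ultimately show False by simp
  qed
qed

lemma rl_separable_circulants:
  fixes emb :: "lgraph set \<Rightarrow> colour \<Rightarrow> real"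
  assumes "0 < n" "2 * m \<le> n + 2" "I \<subseteq> {..<m}"
    and emb: "\<And>s c. s < m \<Longrightarrow>
      emb (circulant_class n s) c = (if c \<in> circulant_colour FF n s ` {..T} then \<alpha> else 0)"
    and radius: "\<bar>\<alpha>\<bar> * sqrt (real T + 1) \<le> r"
    and margin: "2 \<le> m \<Longrightarrow> 2 * lam\<^sup>2 * m \<le> \<alpha>\<^sup>2 * T"
  shows "rl_separable (coords FF n T) r lam emb y (circulant_class n ` I)"
  unfolding rl_separable_def
proof (intro conjI allI impI)
  show "\<exists>x0. \<forall>G\<in>circulant_class n ` I. vnorm (coords FF n T) (\<lambda>c. emb G c - x0 c) \<le> r"
  proof (intro exI[of _ "\<lambda>_. 0"] ballI)
    fix G assume "G \<in> circulant_class n ` I"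
    then obtain s where "s < m" "G = circulant_class n s" using assms(3) by blast
    then have "vnorm (coords FF n T) (\<lambda>c. emb G c - 0) = \<bar>\<alpha>\<bar> * sqrt (real T + 1)"
      using emb vnorm_circulant_indicator[OF assms(1)] by simp
    then show "vnorm (coords FF n T) (\<lambda>c. emb G c - 0) \<le> r" using radius by simp
  qed
next
  fix p q
  assume "in_conv_hull (emb ` {G \<in> circulant_class n ` I. \<not> y G}) p \<and>
    in_conv_hull (emb ` {G \<in> circulant_class n ` I. y G}) q"
  moreover have "emb ` {G \<in> circulant_class n ` I. \<not> y G}
      = (emb \<circ> circulant_class n) ` {s \<in> I. \<not> (y \<circ> circulant_class n) s}"
    "emb ` {G \<in> circulant_class n ` I. y G}
      = (emb \<circ> circulant_class n) ` {s \<in> I. (y \<circ> circulant_class n) s}"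
    by auto
  ultimately have
    p: "in_conv_hull ((emb \<circ> circulant_class n) ` {s \<in> I. \<not> (y \<circ> circulant_class n) s}) p"
    and q: "in_conv_hull ((emb \<circ> circulant_class n) ` {s \<in> I. (y \<circ> circulant_class n) s}) q"
    by simp_all
  have "finite I" using assms(3) finite_subset by blast
  have sum_bound: "2 * \<alpha>\<^sup>2 * T / card I \<le> (\<Sum>c\<in>coords FF n T. (p c - q c)\<^sup>2)"
  proof (rule conv_hulls_dist_sq_ge_private_supports[OF \<open>finite I\<close> finite_coords _ _ _ _ p q])
    fix s c assume "s \<in> I"
    then show "(emb \<circ> circulant_class n) s c
        = (if c \<in> circulant_colour FF n s ` {..T} then \<alpha> else 0)"
      using emb assms(3) by auto
  next
    fix s assume "s \<in> I"
    show "circulant_colour FF n s ` {1..T} \<subseteq> coords FF n T \<inter> circulant_colour FF n s ` {..T}"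
      using circulant_colour_in_coords[OF assms(1)] by auto
    show "card (circulant_colour FF n s ` {1..T}) = T" by (simp add: card_circulant_colours)
  next
    fix s s' assume "s \<in> I" "s' \<in> I" "s \<noteq> s'"
    then have "2 * s \<le> n" "2 * s' \<le> n" using assms(2,3) by auto
    then have "circulant_colour FF n s t \<noteq> circulant_colour FF n s' t'" if "1 \<le> t" for t t'
      using circulant_colour_neq[OF \<open>s \<noteq> s'\<close>] that by simp
    then show "circulant_colour FF n s ` {1..T} \<inter> circulant_colour FF n s' ` {..T} = {}" by auto
  qed
  have "2 \<le> card I"
  proof -
    obtain s0 s1 where "s0 \<in> I" "s1 \<in> I" "\<not> y (circulant_class n s0)" "y (circulant_class n s1)"
      using in_conv_hull_nonempty[OF p] in_conv_hull_nonempty[OF q] by auto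
    then have "{s0, s1} \<subseteq> I" "s0 \<noteq> s1" by auto
    then show ?thesis using card_mono[OF \<open>finite I\<close>, of "{s0, s1}"] by simp
  qed
  moreover have "card I \<le> m" using card_mono[OF _ assms(3)] by simp
  ultimately have "2 \<le> m" by linarith
  then have "4 * lam\<^sup>2 * m \<le> 2 * \<alpha>\<^sup>2 * T" using margin by linarith
  then have "4 * lam\<^sup>2 \<le> 2 * \<alpha>\<^sup>2 * T / m" using \<open>2 \<le> m\<close> by (simp add: field_simps)
  also have "\<dots> \<le> 2 * \<alpha>\<^sup>2 * T / card I"
    using \<open>2 \<le> card I\<close> \<open>card I \<le> m\<close> by (intro divide_left_mono) auto
  also have "\<dots> \<le> (\<Sum>c\<in>coords FF n T. (p c - q c)\<^sup>2)" by fact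
  finally have "4 * lam\<^sup>2 \<le> (\<Sum>c\<in>coords FF n T. (p c - q c)\<^sup>2)" .
  then show "2 * lam \<le> vnorm (coords FF n T) (\<lambda>c. p c - q c)"
    unfolding vnorm_def by (intro real_le_rsqrt) (simp add: power_mult_distrib)
qed

lemma vc_dim_ge_circulants:
  fixes emb :: "lgraph set \<Rightarrow> colour \<Rightarrow> real"
  assumes "0 < n" "2 * m \<le> n + 2"
    and emb: "\<And>s c. s < m \<Longrightarrow>
      emb (circulant_class n s) c = (if c \<in> circulant_colour FF n s ` {..T} then \<alpha> else 0)"
    and radius: "\<bar>\<alpha>\<bar> * sqrt (real T + 1) \<le> r"
    and margin: "2 \<le> m \<Longrightarrow> 2 * lam\<^sup>2 * m \<le> \<alpha>\<^sup>2 * T"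
  shows "m \<le> vc_dim (Gn n) (H_class n (coords FF n T) r lam emb)"
proof -
  have "shatters (H_class n (coords FF n T) r lam emb) (circulant_class n ` {..<m})"
  proof (rule shatters_H_class)
    show "circulant_class n ` {..<m} \<subseteq> Gn n" using circulant_class_in_Gn by auto
    fix y S' assume "S' \<subseteq> circulant_class n ` {..<m}"
    then obtain I where "I \<subseteq> {..<m}" "S' = circulant_class n ` I" by (auto simp: subset_image_iff)
    then show "rl_separable (coords FF n T) r lam emb y S'"
      using rl_separable_circulants[OF assms(1,2) _ emb radius margin] by blast
  qed
  then have "card (circulant_class n ` {..<m})
      \<le> vc_dim (Gn n) (H_class n (coords FF n T) r lam emb)"
    using le_vc_dim[OF finite_Gn] circulant_class_in_Gn by blast
  then show ?thesis using inj_on_circulant_class[OF assms(2)] by (simp add: card_image)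
qed

lemma exists_nat_between_eighth_quarter:
  fixes x :: real
  assumes "0 \<le> x" "x \<le> 2 * real n"
  obtains m :: nat where "2 * m \<le> n + 2" "x / 8 \<le> m" "2 \<le> m \<Longrightarrow> real m \<le> x / 4"
proof
  define m where "m = max 1 (nat \<lfloor>x / 4\<rfloor>)"
  show "2 \<le> m \<Longrightarrow> real m \<le> x / 4" unfolding m_def by linarith
  then show "2 * m \<le> n + 2" using assms(2) unfolding m_def by linarith
  show "x / 8 \<le> m" unfolding m_def by linarith
qed

lemma vc_dim_WL_ge:
  assumes "0 < T" "0 < lam" "(sqrt (real T + 1) * real n)\<^sup>2 / lam\<^sup>2 \<le> real n"
  shows "1 / 8 * ((sqrt (real T + 1) * real n)\<^sup>2 / lam\<^sup>2) \<le> real (vc_dim (Gn n)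
    (H_class n (coords FF n T) (sqrt (real T + 1) * real n) lam (emb_WL FF n T)))"
proof (cases "n = 0")
  case False
  define x where "x = (sqrt (real T + 1) * real n)\<^sup>2 / lam\<^sup>2"
  have x: "0 \<le> x" "x \<le> 2 * real n" "x = (real T + 1) * (real n)\<^sup>2 / lam\<^sup>2"
    using assms(3) by (auto simp: x_def power_mult_distrib)
  obtain m where m: "2 * m \<le> n + 2" "x / 8 \<le> m" "2 \<le> m \<Longrightarrow> real m \<le> x / 4"
    using exists_nat_between_eighth_quarter[OF x(1,2)] by blast
  have "m \<le> vc_dim (Gn n)
      (H_class n (coords FF n T) (sqrt (real T + 1) * real n) lam (emb_WL FF n T))"
  proof (rule vc_dim_ge_circulants[OF _ m(1) emb_WL_circulant_class])
    show "0 < n" using False by simp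
    show "\<bar>real n\<bar> * sqrt (real T + 1) \<le> sqrt (real T + 1) * real n" by simp
    assume "2 \<le> m"
    then have "4 * (lam\<^sup>2 * m) \<le> (real T + 1) * (real n)\<^sup>2"
      using m(3) x(3) assms(2) by (simp add: field_simps)
    moreover have "(real T + 1) * (real n)\<^sup>2 \<le> 2 * ((real n)\<^sup>2 * T)"
      using assms(1) mult_right_mono[of "real T + 1" "2 * real T" "(real n)\<^sup>2"]
      by (simp add: mult_ac)
    ultimately show "2 * lam\<^sup>2 * m \<le> (real n)\<^sup>2 * T" by (simp add: algebra_simps)
  qed
  then show ?thesis using m(2) by (simp add: x_def)
qed simp

lemma vc_dim_WL_norm_ge:
  assumes "0 < T" "0 < lam" "(sqrt (real T / (real T + 1)))\<^sup>2 / lam\<^sup>2 \<le> real n"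
  shows "1 / 8 * (1 / lam\<^sup>2)
    \<le> real (vc_dim (Gn n) (H_class n (coords FF n T) 1 lam (emb_WL_norm FF n T)))"
proof -
  have "1 / 2 \<le> real T / (real T + 1)" using assms(1) by (simp add: field_simps)
  then have "1 / 2 / lam\<^sup>2 \<le> real T / (real T + 1) / lam\<^sup>2"
    using divide_right_mono[of "1 / 2" "real T / (real T + 1)" "lam\<^sup>2"] by simp
  also have "\<dots> \<le> real n" using assms(3) by simp
  finally have half: "1 / 2 / lam\<^sup>2 \<le> real n" .
  have "0 < 1 / 2 / lam\<^sup>2" using assms(2) by simp
  then have "0 < real n" using half by linarith
  then have x: "0 \<le> 1 / lam\<^sup>2" "1 / lam\<^sup>2 \<le> 2 * real n" "0 < n"
    using half by (auto simp: field_simps)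
  obtain m where m: "2 * m \<le> n + 2" "1 / lam\<^sup>2 / 8 \<le> m" "2 \<le> m \<Longrightarrow> real m \<le> 1 / lam\<^sup>2 / 4"
    using exists_nat_between_eighth_quarter[OF x(1,2)] by blast
  have "m \<le> vc_dim (Gn n) (H_class n (coords FF n T) 1 lam (emb_WL_norm FF n T))"
  proof (rule vc_dim_ge_circulants[OF x(3) m(1) emb_WL_norm_circulant_class[OF x(3)]])
    show "\<bar>1 / sqrt (real T + 1)\<bar> * sqrt (real T + 1) \<le> 1" by simp
    assume "2 \<le> m"
    then have "2 * lam\<^sup>2 * m \<le> 1 / 2" using m(3) assms(2) by (simp add: field_simps)
    also have "\<dots> \<le> real T / (real T + 1)" by fact
    finally show "2 * lam\<^sup>2 * m \<le> (1 / sqrt (real T + 1))\<^sup>2 * T" by (simp add: power_divide)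
  qed
  then show ?thesis using m(2) by simp
qed

theorem corollary5:
  fixes FF :: "fgraph set"
  assumes "finite FF" and "\<forall>H\<in>FF. fin_graph H"
  shows "\<exists>c1 c2 :: real. c1 > 0 \<and> c2 > 0 \<and>
    (\<forall>(T::nat) (lam::real) (n::nat).
       T > 0 \<and> lam > 0 \<and> real n \<ge> (sqrt (real T + 1) * real n)\<^sup>2 / lam\<^sup>2 \<longrightarrow>
       c1 * ((sqrt (real T + 1) * real n)\<^sup>2 / lam\<^sup>2)
         \<le> real (vc_dim (Gn n) (H_class n (coords FF n T) (sqrt (real T + 1) * real n) lam
                                   (emb_WL FF n T))) \<and>
       real (vc_dim (Gn n) (H_class n (coords FF n T) (sqrt (real T + 1) * real n) lam
                                   (emb_WL FF n T)))
         \<le> c2 * max 1 ((sqrt (real T + 1) * real n)\<^sup>2 / lam\<^sup>2)) \<and>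
    (\<forall>(T::nat) (lam::real) (n::nat).
       T > 0 \<and> lam > 0 \<and> real n \<ge> (sqrt (real T / (real T + 1)))\<^sup>2 / lam\<^sup>2 \<longrightarrow>
       c1 * (1 / lam\<^sup>2)
         \<le> real (vc_dim (Gn n) (H_class n (coords FF n T) 1 lam (emb_WL_norm FF n T))) \<and>
       real (vc_dim (Gn n) (H_class n (coords FF n T) 1 lam (emb_WL_norm FF n T)))
         \<le> c2 * max 1 (1 / lam\<^sup>2))"
proof (rule exI[of _ "1 / 8"], rule exI[of _ 3], intro conjI allI impI)
qed (blast intro: vc_dim_WL_ge vc_dim_WL_norm_ge vc_dim_H_class_le
    vc_dim_H_class_le[where R = 1, simplified] | simp)+

end
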